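(* Let $\varepsilon>0$ and $A\in GL_n(\mathbf{R})$. Then there exist $\delta>0$ and $R_0>0$ such that for every $w\in\mathbf{R}^n$ with $\|w\|_\infty<\delta$ and $w_i=0$ for every $i\in I_\mathbf{Q}(A)$, and for every $R\ge R_0$, $D_R^+\big(\pi(A\mathbf{Z}^n)\,\Delta\,\pi(A\mathbf{Z}^n+w)\big)\le\varepsilon.$
   Context: Balls are for the sup norm: $B(x,R)=\{y:\max_i|x_i-y_i|<R\}$. For a discrete set $\Gamma\subset\mathbf{R}^n$ and $R\ge1$, $D_R^+(\Gamma)=\sup_{x\in\mathbf{R}^n}\frac{\operatorname{Card}(B(x,R)\cap\Gamma)}{\operatorname{Card}(B(x,R)\cap\mathbf{Z}^n)}$. Let $p:\mathbf{R}\to\mathbf{Z}$ send $x$ to the unique integer $k$ with $k-1/2<x\le k+1/2$ and $\pi:\mathbf{R}^n\to\mathbf{Z}^n$, $\pi((x_i)_i)=(p(x_i))_i$; for a set $X$, $\pi(X)=\{\pi(x):x\in X\}$. For $A=(a_{i,j})\in GL_n(\mathbf{R})$, $I_\mathbf{Q}(A)$ is the set of row indices $i$ such that $a_{i,j}\in\mathbf{Q}$ for every $j\in\{1,\dots,n\}$. *)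

theory Defs
  imports "HOL-Analysis.Analysis"
begin

definition intvecs :: "(real ^ 'n) set" where
  "intvecs = {x. \<forall>i. x $ i \<in> \<int>}"

definition supball :: "real ^ 'n \<Rightarrow> real \<Rightarrow> (real ^ 'n) set" where
  "supball x R = {y. \<forall>i. \<bar>x $ i - y $ i\<bar> < R}"

definition upper_dens :: "real \<Rightarrow> (real ^ 'n) set \<Rightarrow> real" where
  "upper_dens R \<Gamma> = (SUP x. real (card (supball x R \<inter> \<Gamma>)) / real (card (supball x R \<inter> intvecs)))"

definition rnd :: "real \<Rightarrow> int" where
  "rnd x = (THE k::int. real_of_int k - 1/2 < x \<and> x \<le> real_of_int k + 1/2)"

definition rndvec :: "real ^ 'n \<Rightarrow> real ^ 'n" where
  "rndvec x = (\<chi> i. real_of_int (rnd (x $ i)))"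

definition rat_rows :: "real ^ 'n ^ 'n \<Rightarrow> 'n set" where
  "rat_rows A = {i. \<forall>j. A $ i $ j \<in> \<rat>}"

definition lattice :: "real ^ 'n ^ 'n \<Rightarrow> (real ^ 'n) set" where
  "lattice A = (\<lambda>k. A *v k) ` intvecs"

end

theory Submission
  imports Defs "HOL-Analysis.Kronecker_Approximation_Theorem"
begin

(* Rounding changes the i-th coordinate of v + w against v only if v_i lies within |w_i| of
   a half-integer, and w_i = 0 on the rational rows of A, so only irrational rows matter.
   For an irrational row i, Dirichlet's theorem gives an integer vector d with
   (A d)_i = beta mod Z and 0 < |beta| < 1/N.  If v is a lattice point whose i-th coordinate
   is delta-close to a half-integer, delta <= |beta|/2, the translates v - s A d, s < 1/|beta|,
   of all such v are pairwise distinct (the progression s beta mod Z meets a window of width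
   |beta| at most once) and stay in a slightly larger ball.  So such v form at most a 1/N fraction
   of the O(R^n) lattice points of the ball, while the ball has at least (R/2)^n integer
   points. *)

definition near_half_integer :: "real \<Rightarrow> real \<Rightarrow> bool" where
  "near_half_integer \<delta> u \<longleftrightarrow> (\<exists>z::int. \<bar>u - of_int z - 1/2\<bar> < \<delta>)"

lemma rnd_eq_ceiling: "rnd u = \<lceil>u - 1/2\<rceil>"
  unfolding rnd_def
proof (rule the_equality)
  show "real_of_int \<lceil>u - 1/2\<rceil> - 1/2 < u \<and> u \<le> real_of_int \<lceil>u - 1/2\<rceil> + 1/2"
    using ceiling_correct[of "u - 1/2"] by linarith
  fix k :: int assume "real_of_int k - 1/2 < u \<and> u \<le> real_of_int k + 1/2"
  then show "k = \<lceil>u - 1/2\<rceil>" by (intro ceiling_unique[symmetric]) auto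
qed

lemma rnd_bounds: "real_of_int (rnd u) - 1/2 < u" "u \<le> real_of_int (rnd u) + 1/2"
  unfolding rnd_eq_ceiling using ceiling_correct[of "u - 1/2"] by linarith+

lemma rnd_unique: "real_of_int k - 1/2 < u \<Longrightarrow> u \<le> real_of_int k + 1/2 \<Longrightarrow> rnd u = k"
  unfolding rnd_eq_ceiling by (intro ceiling_unique) auto

lemma abs_rnd_diff_le: "\<bar>real_of_int (rnd u) - u\<bar> \<le> 1/2"
  using rnd_bounds[of u] by linarith

lemma near_half_integer_add_Ints:
  assumes "n \<in> \<int>"
  shows "near_half_integer \<delta> (u + n) \<longleftrightarrow> near_half_integer \<delta> u"
proof -
  obtain j where n: "n = of_int j" using assms by (elim Ints_cases)
  have "\<bar>u + n - of_int z - 1/2\<bar> = \<bar>u - of_int (z - j) - 1/2\<bar>" for z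
    unfolding n by simp
  then show ?thesis
    unfolding near_half_integer_def by (metis add_diff_cancel_right')
qed

lemma rnd_change_near_half_integer:
  assumes "rnd (u + w) \<noteq> rnd u" "\<bar>w\<bar> < \<delta>"
  shows "near_half_integer \<delta> u"
proof -
  define k where "k = rnd u"
  have "\<not> (real_of_int k - 1/2 < u + w \<and> u + w \<le> real_of_int k + 1/2)"
    using assms(1) rnd_unique unfolding k_def by metis
  then have "\<bar>u - of_int k - 1/2\<bar> < \<delta> \<or> \<bar>u - of_int (k - 1) - 1/2\<bar> < \<delta>"
    using rnd_bounds[of u] assms(2) unfolding k_def by auto
  then show ?thesis
    unfolding near_half_integer_def by blast
qed

lemma abs_rndvec_diff_le: "\<bar>rndvec u $ l - u $ l\<bar> \<le> 1/2"
  using abs_rnd_diff_le[of "u $ l"] by (simp add: rndvec_def)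

lemma rndvec_change_near_half_integer:
  assumes "rndvec (u + w) \<noteq> rndvec u" "\<forall>i. \<bar>w $ i\<bar> < \<delta>"
  obtains i where "w $ i \<noteq> 0" "near_half_integer \<delta> (u $ i)"
proof -
  obtain i where i: "rnd (u $ i + w $ i) \<noteq> rnd (u $ i)"
    using assms(1) by (auto simp: rndvec_def vec_eq_iff)
  then have "w $ i \<noteq> 0" by auto
  with i assms(2) that show thesis
    using rnd_change_near_half_integer by blast
qed

lemma mem_vec_lambda_PiE_iff:
  "k \<in> vec_lambda ` PiE (UNIV :: 'n::finite set) F \<longleftrightarrow> (\<forall>l. k $ l \<in> F l)"
proof
  assume "\<forall>l. k $ l \<in> F l"
  then have "(\<lambda>l. k $ l) \<in> PiE UNIV F" by auto
  then show "k \<in> vec_lambda ` PiE UNIV F" by (metis image_eqI vec_lambda_eta)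
qed auto

lemma card_vec_lambda_PiE_int_intervals:
  "card (vec_lambda ` PiE (UNIV :: 'n::finite set) (\<lambda>l. real_of_int ` {a l..b l}))
     = (\<Prod>l\<in>UNIV. nat (b l - a l + 1))"
proof -
  have "inj_on vec_lambda (PiE (UNIV :: 'n set) F)" for F :: "'n \<Rightarrow> real set"
    by (rule inj_onI) (simp add: vec_lambda_inject)
  then show ?thesis
    by (simp add: card_image card_PiE inj_on_def)
qed

lemma intvecs_box_subset:
  "{k \<in> intvecs. \<forall>l. \<bar>k $ l - c $ l\<bar> \<le> r}
     \<subseteq> vec_lambda ` PiE (UNIV :: 'n::finite set) (\<lambda>l. real_of_int ` {\<lceil>c $ l - r\<rceil>..\<lfloor>c $ l + r\<rfloor>})"
proof (clarsimp simp: mem_vec_lambda_PiE_iff)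
  fix k :: "real ^ 'n" and l
  assume "k \<in> intvecs" "\<forall>l. \<bar>k $ l - c $ l\<bar> \<le> r"
  then have bound: "\<bar>k $ l - c $ l\<bar> \<le> r" by blast
  from \<open>k \<in> intvecs\<close> obtain z where z: "k $ l = of_int z"
    unfolding intvecs_def by (auto elim: Ints_cases)
  with bound have "\<lceil>c $ l - r\<rceil> \<le> z" "z \<le> \<lfloor>c $ l + r\<rfloor>"
    by (auto simp: ceiling_le_iff le_floor_iff abs_le_iff)
  with z show "k $ l \<in> real_of_int ` {\<lceil>c $ l - r\<rceil>..\<lfloor>c $ l + r\<rfloor>}"
    by auto
qed

lemma finite_intvecs_box: "finite {k \<in> intvecs. \<forall>l. \<bar>k $ l - c $ l\<bar> \<le> r}"
  by (rule finite_subset[OF intvecs_box_subset]) (intro finite_imageI finite_PiE; auto)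

lemma card_intvecs_box_le:
  fixes c :: "real ^ 'n"
  assumes "r \<ge> 0"
  shows "real (card {k \<in> intvecs. \<forall>l. \<bar>k $ l - c $ l\<bar> \<le> r}) \<le> (2 * r + 1) ^ CARD('n)"
proof -
  have side: "real (nat (\<lfloor>c $ l + r\<rfloor> - \<lceil>c $ l - r\<rceil> + 1)) \<le> 2 * r + 1" for l
    using assms by linarith
  have "card {k \<in> intvecs. \<forall>l. \<bar>k $ l - c $ l\<bar> \<le> r}
      \<le> (\<Prod>l\<in>UNIV. nat (\<lfloor>c $ l + r\<rfloor> - \<lceil>c $ l - r\<rceil> + 1))"
    using card_mono[OF _ intvecs_box_subset] unfolding card_vec_lambda_PiE_int_intervals
    by (simp add: finite_PiE)
  then have "real (card {k \<in> intvecs. \<forall>l. \<bar>k $ l - c $ l\<bar> \<le> r})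
      \<le> (\<Prod>l\<in>UNIV. real (nat (\<lfloor>c $ l + r\<rfloor> - \<lceil>c $ l - r\<rceil> + 1)))"
    by (simp only: of_nat_le_iff of_nat_prod[symmetric])
  also have "\<dots> \<le> (\<Prod>l\<in>(UNIV :: 'n set). 2 * r + 1)"
    by (rule prod_mono) (use side in auto)
  finally show ?thesis by simp
qed

lemma card_intvecs_supball_ge:
  fixes x :: "real ^ 'n"
  assumes "R \<ge> 1"
  shows "(R / 2) ^ CARD('n) \<le> real (card (supball x R \<inter> intvecs))"
proof -
  define F where "F l = real_of_int ` {\<lfloor>x $ l - R\<rfloor> + 1..\<lfloor>x $ l - R\<rfloor> + \<lfloor>R\<rfloor>}" for l
  have "vec_lambda ` PiE UNIV F \<subseteq> supball x R \<inter> intvecs"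
  proof
    fix y :: "real ^ 'n" assume y: "y \<in> vec_lambda ` PiE UNIV F"
    have "y $ l \<in> \<int> \<and> \<bar>x $ l - y $ l\<bar> < R" for l
    proof -
      have "y $ l \<in> F l" using y mem_vec_lambda_PiE_iff by blast
      then obtain z where z: "y $ l = of_int z" "\<lfloor>x $ l - R\<rfloor> + 1 \<le> z" "z \<le> \<lfloor>x $ l - R\<rfloor> + \<lfloor>R\<rfloor>"
        unfolding F_def by auto
      then have "x $ l - R < of_int z" "of_int z \<le> x $ l"
        by linarith+
      with z(1) show ?thesis using assms by auto
    qed
    then show "y \<in> supball x R \<inter> intvecs"
      unfolding supball_def intvecs_def by auto
  qed
  moreover have "finite (supball x R \<inter> intvecs)"
    by (rule finite_subset[OF _ finite_intvecs_box[of x R]])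
      (force simp: supball_def abs_minus_commute intro: less_imp_le)
  ultimately have "card (vec_lambda ` PiE UNIV F) \<le> card (supball x R \<inter> intvecs)"
    by (rule card_mono[rotated])
  then have "nat \<lfloor>R\<rfloor> ^ CARD('n) \<le> card (supball x R \<inter> intvecs)"
    unfolding F_def card_vec_lambda_PiE_int_intervals by simp
  then have "real (nat \<lfloor>R\<rfloor>) ^ CARD('n) \<le> real (card (supball x R \<inter> intvecs))"
    by (metis of_nat_le_iff of_nat_power)
  moreover have "R / 2 \<le> real (nat \<lfloor>R\<rfloor>)"
  proof -
    have "1 \<le> \<lfloor>R\<rfloor>" using assms by simp
    then show ?thesis using floor_correct[of R] by linarith
  qed
  then have "(R / 2) ^ CARD('n) \<le> real (nat \<lfloor>R\<rfloor>) ^ CARD('n)"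
    using assms by (intro power_mono) auto
  ultimately show ?thesis by linarith
qed

lemma abs_matrix_vector_mult_nth_le:
  fixes B :: "real ^ 'n ^ 'm"
  assumes "\<forall>j. \<bar>v $ j\<bar> \<le> \<rho>"
  shows "\<bar>(B *v v) $ l\<bar> \<le> (\<Sum>i\<in>UNIV. \<Sum>j\<in>UNIV. \<bar>B $ i $ j\<bar>) * \<rho>"
proof -
  have "0 \<le> \<rho>" using assms abs_ge_zero order_trans by blast
  have "\<bar>(B *v v) $ l\<bar> \<le> (\<Sum>j\<in>UNIV. \<bar>B $ l $ j\<bar> * \<rho>)"
    unfolding matrix_vector_mult_def vec_lambda_beta
    by (rule order_trans[OF sum_abs sum_mono]) (simp add: abs_mult assms mult_left_mono)
  also have "\<dots> \<le> (\<Sum>i\<in>UNIV. \<Sum>j\<in>UNIV. \<bar>B $ i $ j\<bar>) * \<rho>"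
    unfolding sum_distrib_right[symmetric] using \<open>0 \<le> \<rho>\<close>
    by (intro mult_right_mono member_le_sum) (auto intro: sum_nonneg)
  finally show ?thesis .
qed

lemma lattice_supball_subset_image_box:
  fixes A B :: "real ^ 'n ^ 'n"
  assumes "B ** A = mat 1"
  shows "lattice A \<inter> supball x \<rho>
    \<subseteq> (\<lambda>k. A *v k) ` {k \<in> intvecs. \<forall>l. \<bar>k $ l - (B *v x) $ l\<bar> \<le> (\<Sum>i\<in>UNIV. \<Sum>j\<in>UNIV. \<bar>B $ i $ j\<bar>) * \<rho>}"
proof
  fix v assume v: "v \<in> lattice A \<inter> supball x \<rho>"
  then obtain k where k: "k \<in> intvecs" "v = A *v k"
    unfolding lattice_def by blast
  have "\<bar>(v - x) $ j\<bar> \<le> \<rho>" for j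
  proof -
    have "\<bar>x $ j - v $ j\<bar> < \<rho>" using v unfolding supball_def by blast
    then show ?thesis by (simp add: abs_minus_commute)
  qed
  then have "\<bar>(B *v (v - x)) $ l\<bar> \<le> (\<Sum>i\<in>UNIV. \<Sum>j\<in>UNIV. \<bar>B $ i $ j\<bar>) * \<rho>" for l
    by (intro abs_matrix_vector_mult_nth_le) blast
  moreover have "B *v (v - x) = k - B *v x"
    using assms k(2) by (simp add: matrix_vector_mul_assoc matrix_vector_mult_diff_distrib)
  ultimately show "v \<in> (\<lambda>k. A *v k) ` {k \<in> intvecs. \<forall>l. \<bar>k $ l - (B *v x) $ l\<bar> \<le> (\<Sum>i\<in>UNIV. \<Sum>j\<in>UNIV. \<bar>B $ i $ j\<bar>) * \<rho>}"
    using k(1) unfolding k(2) by (intro image_eqI[where x = k]) auto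
qed

lemma finite_lattice_supball:
  assumes "invertible A"
  shows "finite (lattice A \<inter> supball x \<rho>)"
proof -
  obtain B where "B ** A = mat 1" using assms unfolding invertible_def by blast
  then show ?thesis
    by (rule finite_subset[OF lattice_supball_subset_image_box]) (intro finite_imageI finite_intvecs_box)
qed

lemma card_lattice_supball_le:
  fixes A :: "real ^ 'n ^ 'n"
  assumes "invertible A"
  obtains K where "\<And>x \<rho>. 1 \<le> \<rho> \<Longrightarrow> real (card (lattice A \<inter> supball x \<rho>)) \<le> (K * \<rho>) ^ CARD('n)"
proof -
  obtain B where B: "B ** A = mat 1" using assms unfolding invertible_def by blast
  define K0 where "K0 = (\<Sum>i\<in>UNIV. \<Sum>j\<in>UNIV. \<bar>B $ i $ j\<bar>)"
  have "0 \<le> K0" unfolding K0_def by (auto intro: sum_nonneg)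
  have "real (card (lattice A \<inter> supball x \<rho>)) \<le> ((2 * K0 + 1) * \<rho>) ^ CARD('n)" if "1 \<le> \<rho>" for x \<rho>
  proof -
    have "card (lattice A \<inter> supball x \<rho>)
        \<le> card ((\<lambda>k. A *v k) ` {k \<in> intvecs. \<forall>l. \<bar>k $ l - (B *v x) $ l\<bar> \<le> K0 * \<rho>})"
      unfolding K0_def
      by (rule card_mono[OF finite_imageI[OF finite_intvecs_box] lattice_supball_subset_image_box[OF B]])
    also have "\<dots> \<le> card {k \<in> intvecs. \<forall>l. \<bar>k $ l - (B *v x) $ l\<bar> \<le> K0 * \<rho>}"
      by (rule card_image_le[OF finite_intvecs_box])
    finally have "real (card (lattice A \<inter> supball x \<rho>)) \<le> (2 * (K0 * \<rho>) + 1) ^ CARD('n)"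
      using card_intvecs_box_le[of "K0 * \<rho>" "B *v x"] \<open>0 \<le> K0\<close> that by simp
    also have "\<dots> \<le> ((2 * K0 + 1) * \<rho>) ^ CARD('n)"
      using \<open>0 \<le> K0\<close> that by (intro power_mono) (auto simp: algebra_simps)
    finally show ?thesis .
  qed
  then show thesis
    using that[of "2 * K0 + 1"] by simp
qed

lemma lattice_diff_scaleR_mem:
  assumes "u \<in> lattice A" "d \<in> intvecs"
  shows "u - real s *\<^sub>R (A *v d) \<in> lattice A"
proof -
  obtain k where "k \<in> intvecs" "u = A *v k" using assms(1) unfolding lattice_def by blast
  moreover have "k - real s *\<^sub>R d \<in> intvecs"
    using \<open>k \<in> intvecs\<close> assms(2) unfolding intvecs_def by auto
  moreover have "u - real s *\<^sub>R (A *v d) = A *v (k - real s *\<^sub>R d)"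
    using \<open>u = A *v k\<close> by (simp add: matrix_vector_mult_diff_distrib matrix_vector_mult_scaleR)
  ultimately show ?thesis
    unfolding lattice_def by blast
qed

lemma near_half_integer_progression_unique:
  fixes \<beta> c \<delta> :: real and m s s' :: nat
  assumes "\<beta> \<noteq> 0" "m * \<bar>\<beta>\<bar> \<le> 1" "\<delta> \<le> \<bar>\<beta>\<bar> / 2" "s < m" "s' < m"
    and "near_half_integer \<delta> (c + s * \<beta>)" "near_half_integer \<delta> (c + s' * \<beta>)"
  shows "s = s'"
proof -
  obtain za zb :: int where a: "\<bar>c + s * \<beta> - za - 1/2\<bar> < \<delta>" and b: "\<bar>c + s' * \<beta> - zb - 1/2\<bar> < \<delta>"
    using assms(6,7) unfolding near_half_integer_def by blast
  have close: "\<bar>(real s - real s') * \<beta> - of_int (za - zb)\<bar> < \<bar>\<beta>\<bar>"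
    using a b assms(3) unfolding left_diff_distrib abs_less_iff of_int_diff by linarith
  have "\<bar>(real s - real s') * \<beta>\<bar> \<le> (real m - 1) * \<bar>\<beta>\<bar>"
    unfolding abs_mult using assms(4,5) by (intro mult_right_mono) auto
  with assms(2) have "\<bar>(real s - real s') * \<beta>\<bar> \<le> 1 - \<bar>\<beta>\<bar>"
    by (simp add: algebra_simps)
  with close have "\<bar>real_of_int (za - zb)\<bar> < 1"
    by linarith
  then have "za = zb" by simp
  with close have "\<bar>real s - real s'\<bar> * \<bar>\<beta>\<bar> < 1 * \<bar>\<beta>\<bar>"
    by (simp add: abs_mult)
  then have "\<bar>real s - real s'\<bar> < 1"
    by (rule mult_right_less_imp_less) simp
  then have "s < s' + 1" "s' < s + 1"
    by linarith+
  then show ?thesis by linarith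
qed

lemma supball_mono: "r \<le> r' \<Longrightarrow> supball x r \<subseteq> supball x r'"
  unfolding supball_def by (force intro: less_le_trans)

lemma card_near_half_integer_translates_le:
  fixes L :: "(real ^ 'n) set" and b :: "real ^ 'n" and m :: nat and \<rho> M \<beta> \<delta> :: real
  assumes fin: "finite (L \<inter> supball x (\<rho> + m * M))"
    and closed: "\<And>v s. v \<in> L \<Longrightarrow> s < m \<Longrightarrow> v - real s *\<^sub>R b \<in> L"
    and M: "\<forall>l. \<bar>b $ l\<bar> \<le> M"
    and \<beta>: "b $ i - \<beta> \<in> \<int>" "\<beta> \<noteq> 0" "real m * \<bar>\<beta>\<bar> \<le> 1" "\<delta> \<le> \<bar>\<beta>\<bar> / 2"
  shows "m * card {v \<in> L \<inter> supball x \<rho>. near_half_integer \<delta> (v $ i)} \<le> card (L \<inter> supball x (\<rho> + m * M))"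
proof -
  define T where "T = {v \<in> L \<inter> supball x \<rho>. near_half_integer \<delta> (v $ i)}"
  define shift where "shift = (\<lambda>(v, s::nat). v - real s *\<^sub>R b)"
  have "0 \<le> M" using M abs_ge_zero order_trans by blast
  have shift_mem: "shift (v, s) \<in> L \<inter> supball x (\<rho> + m * M)" if "v \<in> T" "s < m" for v s
  proof -
    have "\<bar>x $ l - (v - real s *\<^sub>R b) $ l\<bar> < \<rho> + m * M" for l
    proof -
      have "\<bar>x $ l - v $ l\<bar> < \<rho>" using that(1) unfolding T_def supball_def by blast
      moreover have "\<bar>real s * b $ l\<bar> \<le> m * M"
        unfolding abs_mult using that(2) M \<open>0 \<le> M\<close> by (intro mult_mono) auto
      ultimately show ?thesis
        using abs_triangle_ineq[of "x $ l - v $ l" "real s * b $ l"] by simp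
    qed
    then show ?thesis using closed that unfolding T_def supball_def shift_def by auto
  qed
  have on_progression: "near_half_integer \<delta> (u $ i + real s * \<beta>)" if "u + real s *\<^sub>R b \<in> T" for u s
  proof -
    have "real s * (b $ i - \<beta>) \<in> \<int>" using \<beta>(1) by simp
    moreover have "near_half_integer \<delta> ((u $ i + real s * \<beta>) + real s * (b $ i - \<beta>))"
      using that unfolding T_def by (simp add: algebra_simps)
    ultimately show ?thesis using near_half_integer_add_Ints by blast
  qed
  have "inj_on shift (T \<times> {..<m})"
  proof (rule inj_onI, clarify)
    fix v s v' s' assume "v \<in> T" "s < m" "v' \<in> T" "s' < m" and eq: "shift (v, s) = shift (v', s')"
    define u where "u = shift (v, s)"
    have v: "v = u + real s *\<^sub>R b"
      unfolding u_def shift_def by simp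
    have "u = shift (v', s')" unfolding u_def eq ..
    then have v': "v' = u + real s' *\<^sub>R b"
      by (simp add: shift_def)
    have "s = s'"
      using near_half_integer_progression_unique[OF \<beta>(2,3,4) \<open>s < m\<close> \<open>s' < m\<close>]
        on_progression \<open>v \<in> T\<close> \<open>v' \<in> T\<close> unfolding v v' by blast
    then show "v = v' \<and> s = s'" using v v' by simp
  qed
  then have "m * card T = card (shift ` (T \<times> {..<m}))"
    by (simp add: card_image card_cartesian_product)
  also have "\<dots> \<le> card (L \<inter> supball x (\<rho> + m * M))"
    by (rule card_mono[OF fin]) (use shift_mem in auto)
  finally show ?thesis unfolding T_def .
qed

lemma irrational_row_small_residue:
  fixes A :: "real ^ 'n ^ 'n"
  assumes "i \<notin> rat_rows A" "N > 0"
  obtains d \<beta> m where "d \<in> intvecs" "(A *v d) $ i - \<beta> \<in> \<int>" "\<beta> \<noteq> 0" "N \<le> m" "real m * \<bar>\<beta>\<bar> \<le> 1"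
proof -
  obtain j where j: "A $ i $ j \<notin> \<rat>" using assms(1) unfolding rat_rows_def by auto
  obtain h k where "0 < k" and hk: "\<bar>of_int k * A $ i $ j - of_int h\<bar> < 1 / N"
    using Dirichlet_approx[OF assms(2)] by blast
  define d where "d = of_int k *\<^sub>R axis j (1::real)"
  define \<beta> where "\<beta> = of_int k * A $ i $ j - of_int h"
  define m where "m = nat \<lfloor>1 / \<bar>\<beta>\<bar>\<rfloor>"
  have "d \<in> intvecs" unfolding d_def intvecs_def by (auto simp: axis_def)
  moreover have "(A *v d) $ i = of_int k * A $ i $ j"
    unfolding d_def by (simp add: matrix_vector_mult_def axis_def if_distrib cong: if_cong)
  then have "(A *v d) $ i - \<beta> \<in> \<int>" unfolding \<beta>_def by simp
  moreover have "\<beta> \<noteq> 0"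
  proof
    assume "\<beta> = 0"
    then have "A $ i $ j = of_int h / of_int k" using \<open>0 < k\<close> unfolding \<beta>_def by (simp add: field_simps)
    with j show False by simp
  qed
  moreover have "N \<le> m"
  proof -
    have "real N < 1 / \<bar>\<beta>\<bar>" using hk \<open>\<beta> \<noteq> 0\<close> assms(2) unfolding \<beta>_def by (simp add: field_simps)
    then show ?thesis unfolding m_def by (simp add: le_nat_floor)
  qed
  moreover have "real m * \<bar>\<beta>\<bar> \<le> 1"
  proof -
    have "0 \<le> \<lfloor>1 / \<bar>\<beta>\<bar>\<rfloor>" by simp
    then have "real m \<le> 1 / \<bar>\<beta>\<bar>" unfolding m_def by simp
    then show ?thesis using \<open>\<beta> \<noteq> 0\<close> by (simp add: field_simps)
  qed
  ultimately show thesis using that by blast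
qed

lemma irrational_row_near_half_integer_sparse:
  fixes A :: "real ^ 'n ^ 'n"
  assumes "invertible A" "i \<notin> rat_rows A" "N > 0"
  shows "\<exists>\<delta>>0. \<exists>R1. \<forall>x R \<delta>'. R1 \<le> R \<and> \<delta>' \<le> \<delta> \<longrightarrow>
    N * card {v \<in> lattice A \<inter> supball x (R + 1). near_half_integer \<delta>' (v $ i)}
      \<le> card (lattice A \<inter> supball x (2 * R))"
proof -
  obtain d \<beta> m where d: "d \<in> intvecs" and \<beta>: "(A *v d) $ i - \<beta> \<in> \<int>" "\<beta> \<noteq> 0" "N \<le> m" "real m * \<bar>\<beta>\<bar> \<le> 1"
    using irrational_row_small_residue[OF assms(2,3)] .
  define M where "M = (\<Sum>l\<in>UNIV. \<bar>(A *v d) $ l\<bar>)"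
  have M: "\<forall>l. \<bar>(A *v d) $ l\<bar> \<le> M" unfolding M_def by (auto intro: member_le_sum)
  have "N * card {v \<in> lattice A \<inter> supball x (R + 1). near_half_integer \<delta>' (v $ i)}
      \<le> card (lattice A \<inter> supball x (2 * R))"
    if R: "1 + m * M \<le> R" and \<delta>': "\<delta>' \<le> \<bar>\<beta>\<bar> / 2" for x R \<delta>'
  proof -
    let ?T = "{v \<in> lattice A \<inter> supball x (R + 1). near_half_integer \<delta>' (v $ i)}"
    have "N * card ?T \<le> m * card ?T" using \<beta>(3) by simp
    also have "\<dots> \<le> card (lattice A \<inter> supball x (R + 1 + m * M))"
      using lattice_diff_scaleR_mem[OF _ d] \<delta>'
      by (intro card_near_half_integer_translates_le[OF finite_lattice_supball[OF assms(1)] _ M \<beta>(1,2,4)]) auto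
    also have "\<dots> \<le> card (lattice A \<inter> supball x (2 * R))"
      using R supball_mono[of "R + 1 + m * M" "2 * R" x]
      by (intro card_mono[OF finite_lattice_supball[OF assms(1)]]) auto
    finally show ?thesis .
  qed
  moreover have "0 < \<bar>\<beta>\<bar> / 2" using \<beta>(2) by simp
  ultimately show ?thesis by blast
qed

lemma irrational_rows_near_half_integer_sparse_uniform:
  fixes A :: "real ^ 'n ^ 'n"
  assumes "invertible A" "N > 0"
  obtains \<delta> R0 where "0 < \<delta>" "\<delta> \<le> 1/2" "1 \<le> R0"
    and "\<And>i x R. i \<notin> rat_rows A \<Longrightarrow> R0 \<le> R \<Longrightarrow>
      N * card {v \<in> lattice A \<inter> supball x (R + 1). near_half_integer \<delta> (v $ i)}
        \<le> card (lattice A \<inter> supball x (2 * R))"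
proof -
  define sparse where "sparse i \<delta> R1 \<longleftrightarrow> (\<forall>x R \<delta>'. R1 \<le> R \<and> \<delta>' \<le> \<delta> \<longrightarrow>
      N * card {v \<in> lattice A \<inter> supball x (R + 1). near_half_integer \<delta>' (v $ i)}
        \<le> card (lattice A \<inter> supball x (2 * R)))" for i \<delta> R1
  have "\<forall>i\<in>- rat_rows A. \<exists>\<delta>>0. \<exists>R1. sparse i \<delta> R1"
    unfolding sparse_def using irrational_row_near_half_integer_sparse[OF assms(1) _ assms(2)] by simp
  then obtain \<delta>r where \<delta>r: "\<forall>i\<in>- rat_rows A. 0 < \<delta>r i \<and> (\<exists>R1. sparse i (\<delta>r i) R1)"
    by (auto dest: bchoice)
  then have "\<forall>i\<in>- rat_rows A. \<exists>R1. sparse i (\<delta>r i) R1" by blast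
  then obtain R1 where R1: "\<forall>i\<in>- rat_rows A. sparse i (\<delta>r i) (R1 i)"
    by (auto dest: bchoice)
  define \<delta> where "\<delta> = Min (insert (1/2) (\<delta>r ` (- rat_rows A)))"
  define R0 where "R0 = Max (insert 1 (R1 ` (- rat_rows A)))"
  show thesis
  proof (rule that[of \<delta> R0])
    show "0 < \<delta>" unfolding \<delta>_def using \<delta>r by (simp add: Min_gr_iff)
    show "\<delta> \<le> 1/2" unfolding \<delta>_def by (rule Min_le) auto
    show "1 \<le> R0" unfolding R0_def by (rule Max_ge) auto
    fix i x R assume i: "i \<notin> rat_rows A" and "R0 \<le> R"
    moreover have "R1 i \<le> R0" unfolding R0_def by (rule Max_ge) (use i in auto)
    moreover have "\<delta> \<le> \<delta>r i" unfolding \<delta>_def by (rule Min_le) (use i in auto)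
    moreover have "sparse i (\<delta>r i) (R1 i)" using R1 i by simp
    ultimately show "N * card {v \<in> lattice A \<inter> supball x (R + 1). near_half_integer \<delta> (v $ i)}
        \<le> card (lattice A \<inter> supball x (2 * R))"
      unfolding sparse_def using order_trans by blast
  qed
qed

lemma card_rounding_symdiff_le_row_bound:
  fixes L :: "(real ^ 'n) set" and C :: real
  assumes w: "\<forall>i. \<bar>w $ i\<bar> < \<delta>" "\<delta> \<le> 1/2"
    and fin: "finite (L \<inter> supball x (R + 1))"
    and rows: "\<And>i. w $ i \<noteq> 0 \<Longrightarrow> real (card {v \<in> L \<inter> supball x (R + 1). near_half_integer \<delta> (v $ i)}) \<le> C"
    and "0 \<le> C"
  shows "real (card (supball x R \<inter> sym_diff (rndvec ` L) (rndvec ` (\<lambda>v. v + w) ` L))) \<le> 2 * real CARD('n) * C"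
proof -
  define G where "G = {v \<in> L \<inter> supball x (R + 1). \<exists>i. w $ i \<noteq> 0 \<and> near_half_integer \<delta> (v $ i)}"
  have in_G: "v \<in> G" if v: "v \<in> L" "v \<in> supball x (R + 1)" and ne: "rndvec (v + w) \<noteq> rndvec v" for v
  proof -
    obtain i where "w $ i \<noteq> 0" "near_half_integer \<delta> (v $ i)"
      using rndvec_change_near_half_integer[OF ne w(1)] .
    with v show ?thesis unfolding G_def by blast
  qed
  have cover: "supball x R \<inter> sym_diff (rndvec ` L) (rndvec ` (\<lambda>v. v + w) ` L)
      \<subseteq> rndvec ` G \<union> (\<lambda>v. rndvec (v + w)) ` G"
  proof
    fix y assume y: "y \<in> supball x R \<inter> sym_diff (rndvec ` L) (rndvec ` (\<lambda>v. v + w) ` L)"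
    have y_near: "\<bar>x $ l - y $ l\<bar> < R" for l using y unfolding supball_def by blast
    have near: "v \<in> supball x (R + 1)" if y_eq: "y = rndvec (v + u)" and u: "\<forall>l. \<bar>u $ l\<bar> < 1/2" for v u
    proof -
      have "\<bar>x $ l - v $ l\<bar> < R + 1" for l
        using y_near[of l] abs_rndvec_diff_le[of "v + u" l] u[rule_format, of l]
        unfolding y_eq abs_less_iff abs_le_iff vector_add_component by linarith
      then show ?thesis unfolding supball_def by blast
    qed
    have w_half: "\<forall>l. \<bar>w $ l\<bar> < 1/2"
      using w less_le_trans by blast
    from y consider (unshifted) v where "v \<in> L" "y = rndvec v" "y \<notin> (\<lambda>v. rndvec (v + w)) ` L"
      | (shifted) v where "v \<in> L" "y = rndvec (v + w)" "y \<notin> rndvec ` L"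
      unfolding image_image by blast
    then show "y \<in> rndvec ` G \<union> (\<lambda>v. rndvec (v + w)) ` G"
    proof cases
      case (unshifted v)
      have "v \<in> supball x (R + 1)" using near[of v 0] unshifted by simp
      moreover have "rndvec (v + w) \<noteq> rndvec v" using unshifted by (metis image_eqI)
      ultimately have "v \<in> G" using in_G unshifted(1) by blast
      with unshifted show ?thesis by blast
    next
      case (shifted v)
      have "v \<in> supball x (R + 1)" using near[of v w] shifted w_half by simp
      moreover have "rndvec (v + w) \<noteq> rndvec v" using shifted by (metis image_eqI)
      ultimately have "v \<in> G" using in_G shifted(1) by blast
      with shifted show ?thesis by blast
    qed
  qed
  have "finite G" using fin unfolding G_def by (rule finite_subset[rotated]) blast
  have "card (supball x R \<inter> sym_diff (rndvec ` L) (rndvec ` (\<lambda>v. v + w) ` L))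
      \<le> card (rndvec ` G \<union> (\<lambda>v. rndvec (v + w)) ` G)"
    using \<open>finite G\<close> by (intro card_mono[OF _ cover]) auto
  also have "\<dots> \<le> card (rndvec ` G) + card ((\<lambda>v. rndvec (v + w)) ` G)"
    by (rule card_Un_le)
  also have "\<dots> \<le> card G + card G"
    using \<open>finite G\<close> by (intro add_mono card_image_le)
  finally have "card (supball x R \<inter> sym_diff (rndvec ` L) (rndvec ` (\<lambda>v. v + w) ` L)) \<le> 2 * card G"
    by simp
  moreover have "real (card G) \<le> CARD('n) * C"
  proof -
    have "G = (\<Union>i\<in>{i. w $ i \<noteq> 0}. {v \<in> L \<inter> supball x (R + 1). near_half_integer \<delta> (v $ i)})"
      unfolding G_def by blast
    then have "card G \<le> (\<Sum>i\<in>{i. w $ i \<noteq> 0}. card {v \<in> L \<inter> supball x (R + 1). near_half_integer \<delta> (v $ i)})"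
      by (simp add: card_UN_le)
    then have "real (card G) \<le> (\<Sum>i\<in>{i. w $ i \<noteq> 0}. real (card {v \<in> L \<inter> supball x (R + 1). near_half_integer \<delta> (v $ i)}))"
      by (simp only: of_nat_le_iff of_nat_sum[symmetric])
    also have "\<dots> \<le> (\<Sum>i\<in>{i. w $ i \<noteq> 0}. C)"
      by (rule sum_mono) (use rows in auto)
    also have "\<dots> \<le> CARD('n) * C"
      using \<open>0 \<le> C\<close> by (simp add: card_mono mult_right_mono)
    finally show ?thesis .
  qed
  ultimately show ?thesis by linarith
qed

lemma upper_dens_le:
  fixes \<Gamma> :: "(real ^ 'n) set"
  assumes "1 \<le> R" and bound: "\<And>x. real (card (supball x R \<inter> \<Gamma>)) \<le> c * (R / 2) ^ CARD('n)"
  shows "upper_dens R \<Gamma> \<le> c"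
  unfolding upper_dens_def
proof (rule cSUP_least)
  fix x :: "real ^ 'n"
  have pos: "0 < (R / 2) ^ CARD('n)" using assms(1) by simp
  moreover have "0 \<le> c * (R / 2) ^ CARD('n)"
    using bound[of x] of_nat_0_le_iff order_trans by blast
  ultimately have "0 \<le> c" by (simp add: zero_le_mult_iff)
  then have "c * (R / 2) ^ CARD('n) \<le> c * real (card (supball x R \<inter> intvecs))"
    using card_intvecs_supball_ge[OF assms(1), of x] by (rule mult_left_mono[rotated])
  with bound[of x] pos card_intvecs_supball_ge[OF assms(1), of x]
  show "real (card (supball x R \<inter> \<Gamma>)) / real (card (supball x R \<inter> intvecs)) \<le> c"
    by (simp add: divide_le_eq)
qed simp

lemma lattice_rounding_symdiff_card_le:
  fixes A :: "real ^ 'n ^ 'n" and N :: nat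
  assumes "invertible A" "0 < N"
  obtains \<delta> R0 where "0 < \<delta>" "1 \<le> R0"
    and "\<And>w x R. \<forall>i. \<bar>w $ i\<bar> < \<delta> \<Longrightarrow> \<forall>i\<in>rat_rows A. w $ i = 0 \<Longrightarrow> R0 \<le> R \<Longrightarrow>
      real (card (supball x R \<inter> sym_diff (rndvec ` lattice A) (rndvec ` (\<lambda>v. v + w) ` lattice A)))
        \<le> 2 * real CARD('n) * (real (card (lattice A \<inter> supball x (2 * R))) / N)"
proof -
  obtain \<delta> R0 where "0 < \<delta>" "\<delta> \<le> 1/2" "1 \<le> R0"
    and sparse: "\<And>i x R. i \<notin> rat_rows A \<Longrightarrow> R0 \<le> R \<Longrightarrow>
      N * card {v \<in> lattice A \<inter> supball x (R + 1). near_half_integer \<delta> (v $ i)}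
        \<le> card (lattice A \<inter> supball x (2 * R))"
    using irrational_rows_near_half_integer_sparse_uniform[OF assms] by blast
  show thesis
  proof (rule that[OF \<open>0 < \<delta>\<close> \<open>1 \<le> R0\<close>])
    fix w x and R :: real
    assume w: "\<forall>i. \<bar>w $ i\<bar> < \<delta>" "\<forall>i\<in>rat_rows A. w $ i = 0" and "R0 \<le> R"
    have rows: "real (card {v \<in> lattice A \<inter> supball x (R + 1). near_half_integer \<delta> (v $ i)})
        \<le> real (card (lattice A \<inter> supball x (2 * R))) / N"
      if "w $ i \<noteq> 0" for i
    proof -
      have "N * card {v \<in> lattice A \<inter> supball x (R + 1). near_half_integer \<delta> (v $ i)}
          \<le> card (lattice A \<inter> supball x (2 * R))"
        using w(2) that by (intro sparse \<open>R0 \<le> R\<close>) blast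
      then have "real N * real (card {v \<in> lattice A \<inter> supball x (R + 1). near_half_integer \<delta> (v $ i)})
          \<le> real (card (lattice A \<inter> supball x (2 * R)))"
        by (simp only: of_nat_mult[symmetric] of_nat_le_iff)
      then show ?thesis
        using \<open>0 < N\<close> by (simp add: pos_le_divide_eq mult.commute)
    qed
    show "real (card (supball x R \<inter> sym_diff (rndvec ` lattice A) (rndvec ` (\<lambda>v. v + w) ` lattice A)))
        \<le> 2 * real CARD('n) * (real (card (lattice A \<inter> supball x (2 * R))) / N)"
      using rows
      by (intro card_rounding_symdiff_le_row_bound[OF w(1) \<open>\<delta> \<le> 1/2\<close> finite_lattice_supball[OF assms(1)]]) auto
  qed
qed

lemma lattice_rounding_symdiff_upper_dens_le:
  fixes A :: "real ^ 'n ^ 'n" and K :: real and N :: nat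
  assumes "invertible A" "0 < N"
    and count: "\<And>x \<rho>. 1 \<le> \<rho> \<Longrightarrow> real (card (lattice A \<inter> supball x \<rho>)) \<le> (K * \<rho>) ^ CARD('n)"
  obtains \<delta> R0 where "0 < \<delta>" "1 \<le> R0"
    and "\<And>w R. \<forall>i. \<bar>w $ i\<bar> < \<delta> \<Longrightarrow> \<forall>i\<in>rat_rows A. w $ i = 0 \<Longrightarrow> R0 \<le> R \<Longrightarrow>
      upper_dens R (sym_diff (rndvec ` lattice A) (rndvec ` (\<lambda>v. v + w) ` lattice A))
        \<le> 2 * real CARD('n) * (4 * K) ^ CARD('n) / N"
proof -
  obtain \<delta> R0 where "0 < \<delta>" "1 \<le> R0"
    and card_le: "\<And>w x R. \<forall>i. \<bar>w $ i\<bar> < \<delta> \<Longrightarrow> \<forall>i\<in>rat_rows A. w $ i = 0 \<Longrightarrow> R0 \<le> R \<Longrightarrow>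
      real (card (supball x R \<inter> sym_diff (rndvec ` lattice A) (rndvec ` (\<lambda>v. v + w) ` lattice A)))
        \<le> 2 * real CARD('n) * (real (card (lattice A \<inter> supball x (2 * R))) / N)"
    using lattice_rounding_symdiff_card_le[OF assms(1,2)] by blast
  show thesis
  proof (rule that[OF \<open>0 < \<delta>\<close> \<open>1 \<le> R0\<close>])
    fix w and R :: real
    assume w: "\<forall>i. \<bar>w $ i\<bar> < \<delta>" "\<forall>i\<in>rat_rows A. w $ i = 0" and "R0 \<le> R"
    then have "1 \<le> R" using \<open>1 \<le> R0\<close> by simp
    show "upper_dens R (sym_diff (rndvec ` lattice A) (rndvec ` (\<lambda>v. v + w) ` lattice A))
        \<le> 2 * real CARD('n) * (4 * K) ^ CARD('n) / N"
    proof (rule upper_dens_le[OF \<open>1 \<le> R\<close>])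
      fix x
      have "real (card (supball x R \<inter> sym_diff (rndvec ` lattice A) (rndvec ` (\<lambda>v. v + w) ` lattice A)))
          \<le> 2 * real CARD('n) * (real (card (lattice A \<inter> supball x (2 * R))) / N)"
        by (rule card_le[OF w \<open>R0 \<le> R\<close>])
      also have "\<dots> \<le> 2 * real CARD('n) * ((K * (2 * R)) ^ CARD('n) / N)"
        using count[of "2 * R" x] \<open>1 \<le> R\<close> by (intro mult_left_mono divide_right_mono) auto
      also have "(K * (2 * R)) ^ CARD('n) = (4 * K) ^ CARD('n) * (R / 2) ^ CARD('n)"
      proof -
        have "K * (2 * R) = 4 * K * (R / 2)" by simp
        then show ?thesis by (simp only: power_mult_distrib)
      qed
      finally show "real (card (supball x R \<inter> sym_diff (rndvec ` lattice A) (rndvec ` (\<lambda>v. v + w) ` lattice A)))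
          \<le> 2 * real CARD('n) * (4 * K) ^ CARD('n) / N * (R / 2) ^ CARD('n)"
        by (simp add: mult_ac)
    qed
  qed
qed

theorem lemmaB4:
  fixes A :: "real ^ 'n ^ 'n" and \<epsilon> :: real
  assumes "\<epsilon> > 0" and "invertible A"
  shows "\<exists>\<delta>>0. \<exists>R0>0. \<forall>w :: real ^ 'n.
           (\<forall>i. \<bar>w $ i\<bar> < \<delta>) \<and> (\<forall>i\<in>rat_rows A. w $ i = 0) \<longrightarrow>
           (\<forall>R. R \<ge> R0 \<and> R \<ge> 1 \<longrightarrow>
              upper_dens R
                ((rndvec ` lattice A - rndvec ` ((\<lambda>v. v + w) ` lattice A)) \<union>
                 (rndvec ` ((\<lambda>v. v + w) ` lattice A) - rndvec ` lattice A)) \<le> \<epsilon>)"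
proof -
  obtain K where count: "\<And>x \<rho>. 1 \<le> \<rho> \<Longrightarrow> real (card (lattice A \<inter> supball x \<rho>)) \<le> (K * \<rho>) ^ CARD('n)"
    using card_lattice_supball_le[OF assms(2)] by blast
  define c where "c = 2 * real CARD('n) * (4 * K) ^ CARD('n)"
  define N :: nat where "N = nat \<lceil>c / \<epsilon>\<rceil> + 1"
  have "0 < N" unfolding N_def by simp
  have "c / N \<le> \<epsilon>"
    using real_nat_ceiling_ge[of "c / \<epsilon>"] assms(1) \<open>0 < N\<close> unfolding N_def by (simp add: field_simps)
  obtain \<delta> R0 where "0 < \<delta>" "1 \<le> R0"
    and dens: "\<And>w R. \<forall>i. \<bar>w $ i\<bar> < \<delta> \<Longrightarrow> \<forall>i\<in>rat_rows A. w $ i = 0 \<Longrightarrow> R0 \<le> R \<Longrightarrow>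
      upper_dens R (sym_diff (rndvec ` lattice A) (rndvec ` (\<lambda>v. v + w) ` lattice A)) \<le> c / N"
    using lattice_rounding_symdiff_upper_dens_le[OF assms(2) \<open>0 < N\<close> count] unfolding c_def by blast
  have dens_le_\<epsilon>: "upper_dens R (sym_diff (rndvec ` lattice A) (rndvec ` (\<lambda>v. v + w) ` lattice A)) \<le> \<epsilon>"
    if "\<forall>i. \<bar>w $ i\<bar> < \<delta>" "\<forall>i\<in>rat_rows A. w $ i = 0" "R0 \<le> R" for w R
    using dens[OF that] \<open>c / N \<le> \<epsilon>\<close> by linarith
  show ?thesis
    by (rule exI[of _ \<delta>], rule conjI[OF \<open>0 < \<delta>\<close>], rule exI[of _ R0]) (use dens_le_\<epsilon> \<open>1 \<le> R0\<close> in auto)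
qed

end
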